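(* Let $m,n$ be positive integers and let $K_{m,n}$ be the complete bipartite graph with part sizes $m$ and $n$. Then the number of shellings of $K_{m,n}$ is $$F(K_{m,n})=\frac{m!\,n!\,(mn)!}{(m+n-1)!}.$$
   Context: For a finite undirected graph $G=(V,E)$, a shelling of $G$ is a total ordering $\sigma(1),\sigma(2),\ldots,\sigma(|E|)$ of the edge set $E$ such that for every $k=1,\ldots,|E|$ the edges $\sigma(1),\ldots,\sigma(k)$ form a connected subgraph of $G$. $F(G)$ denotes the number of shellings of $G$. *)

theory Defs
  imports Complex_Main
begin

(* A graph is given by its edge set; an edge is a 2-element set of vertices. *)

definition adj_rel :: "'a set set \<Rightarrow> ('a \<times> 'a) set" where
  "adj_rel S = {(u, v). {u, v} \<in> S}"

definition edges_connected :: "'a set set \<Rightarrow> bool" where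
  "edges_connected S \<longleftrightarrow> (\<forall>u\<in>\<Union>S. \<forall>v\<in>\<Union>S. (u, v) \<in> (adj_rel S)\<^sup>*)"

definition shellings :: "'a set set \<Rightarrow> 'a set list set" where
  "shellings E = {xs. distinct xs \<and> set xs = E \<and>
      (\<forall>k\<in>{1..length xs}. edges_connected (set (take k xs)))}"

definition num_shellings :: "'a set set \<Rightarrow> nat" where
  "num_shellings E = card (shellings E)"

definition complete_bipartite :: "nat \<Rightarrow> nat \<Rightarrow> (nat + nat) set set" where
  "complete_bipartite m n = {{Inl i, Inr j} | i j. i < m \<and> j < n}"

end

theory Submission
  imports Defs
begin

(* Instead of shellings, count the ways to extend a connected edge set S of K_{m,n} to a
   shelling.  This number depends only on |S| = k and on the numbers a, b of left and right
   vertices touched by S: the next edge is one of the ab - k unused edges between touched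
   vertices, one of the (m - a) b edges bringing in a new left vertex, or one of the a (n - b)
   edges bringing in a new right vertex.  The closed form
     (mn - k)! (m + b - 1)! (a + n - 1)! / ((a + b - 1)! (m + n - 1)!)
   satisfies the resulting recurrence and equals 1 for S = K_{m,n}.  A shelling starts with
   any of the mn edges (a = b = k = 1), which gives mn (mn - 1)! m! n! / (m + n - 1)!. *)

definition shelling_completions :: "'a set set \<Rightarrow> 'a set set \<Rightarrow> 'a set list set" where
  "shelling_completions E S = {xs. distinct xs \<and> set xs = E - S \<and>
      (\<forall>k\<in>{1..length xs}. edges_connected (S \<union> set (take k xs)))}"

lemma shellings_eq_completions_empty: "shellings E = shelling_completions E {}"
  unfolding shellings_def shelling_completions_def by simp

lemma Nil_in_shelling_completions_iff: "[] \<in> shelling_completions E S \<longleftrightarrow> E \<subseteq> S"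
  unfolding shelling_completions_def by auto

lemma shelling_completions_eq_Nil:
  assumes "E \<subseteq> S" shows "shelling_completions E S = {[]}"
  using assms by (auto simp: shelling_completions_def) (metis Diff_eq_empty_iff set_empty)

lemma Cons_in_shelling_completions_iff:
  "e # xs \<in> shelling_completions E S \<longleftrightarrow>
     e \<in> E - S \<and> edges_connected (insert e S) \<and> xs \<in> shelling_completions E (insert e S)"
proof -
  have Ball_Suc: "(\<forall>k\<in>{1..Suc l}. P k) \<longleftrightarrow> P 1 \<and> (\<forall>k\<in>{1..l}. P (Suc k))"
    for P :: "nat \<Rightarrow> bool" and l
  proof -
    have "{1..Suc l} = insert 1 (Suc ` {1..l})"
      using Icc_eq_insert_lb_nat[of 1 "Suc l"] by simp
    then show ?thesis by (simp del: image_Suc_atLeastAtMost)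
  qed
  have prefixes: "(\<forall>k\<in>{1..length (e # xs)}. edges_connected (S \<union> set (take k (e # xs)))) \<longleftrightarrow>
      edges_connected (insert e S) \<and>
      (\<forall>k\<in>{1..length xs}. edges_connected (insert e S \<union> set (take k xs)))"
    by (simp only: length_Cons Ball_Suc) simp
  show ?thesis
    unfolding shelling_completions_def mem_Collect_eq prefixes by auto
qed

lemma finite_shelling_completions:
  assumes "finite E" shows "finite (shelling_completions E S)"
proof (rule finite_subset)
  show "shelling_completions E S \<subseteq> {xs. set xs \<subseteq> E \<and> length xs \<le> card E}"
    unfolding shelling_completions_def
    using assms by (auto simp flip: distinct_card intro: card_mono)
  show "finite {xs. set xs \<subseteq> E \<and> length xs \<le> card E}"
    using assms by (rule finite_lists_length_le)
qed

lemma card_shelling_completions_step: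
  assumes "finite E" "\<not> E \<subseteq> S"
  shows "card (shelling_completions E S) =
    (\<Sum>e\<in>{e\<in>E - S. edges_connected (insert e S)}. card (shelling_completions E (insert e S)))"
proof -
  let ?N = "{e\<in>E - S. edges_connected (insert e S)}"
  have "shelling_completions E S = (\<Union>e\<in>?N. Cons e ` shelling_completions E (insert e S))"
  proof (intro equalityI subsetI)
    fix xs assume "xs \<in> shelling_completions E S"
    with assms(2) show "xs \<in> (\<Union>e\<in>?N. Cons e ` shelling_completions E (insert e S))"
      by (cases xs) (auto simp: Nil_in_shelling_completions_iff Cons_in_shelling_completions_iff)
  qed (auto simp: Cons_in_shelling_completions_iff)
  also have "card \<dots> = (\<Sum>e\<in>?N. card (Cons e ` shelling_completions E (insert e S)))"
    using assms(1) finite_shelling_completions by (intro card_UN_disjoint) auto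
  also have "\<dots> = (\<Sum>e\<in>?N. card (shelling_completions E (insert e S)))"
    by (intro sum.cong refl card_image) simp
  finally show ?thesis .
qed

lemma edges_connected_doubleton: "edges_connected {{p, q}}"
  unfolding edges_connected_def adj_rel_def
  by (auto simp: doubleton_eq_iff)

lemma edges_connected_insert_doubleton_iff:
  assumes S: "edges_connected S" "\<Union>S \<noteq> {}"
  shows "edges_connected (insert {p, q} S) \<longleftrightarrow> {p, q} \<inter> \<Union>S \<noteq> {}"
proof
  assume connected: "edges_connected (insert {p, q} S)"
  show "{p, q} \<inter> \<Union>S \<noteq> {}"
  proof
    assume disjoint: "{p, q} \<inter> \<Union>S = {}"
    obtain u where u: "u \<in> \<Union>S" using S(2) by auto
    have "w \<in> \<Union>S" if "(u, w) \<in> (adj_rel (insert {p, q} S))\<^sup>*" for w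
      using that
    proof (induction rule: rtrancl_induct)
      case (step y z)
      with disjoint have "{y, z} \<noteq> {p, q}" by auto
      with step show ?case by (auto simp: adj_rel_def)
    qed (rule u)
    moreover have "(u, p) \<in> (adj_rel (insert {p, q} S))\<^sup>*"
      using connected u unfolding edges_connected_def by auto
    ultimately show False using disjoint by auto
  qed
next
  assume "{p, q} \<inter> \<Union>S \<noteq> {}"
  then obtain r where r: "r \<in> {p, q}" "r \<in> \<Union>S" by auto
  let ?R = "(adj_rel (insert {p, q} S))\<^sup>*"
  have "(adj_rel S)\<^sup>* \<subseteq> ?R" by (rule rtrancl_mono) (auto simp: adj_rel_def)
  moreover have "(p, q) \<in> ?R" "(q, p) \<in> ?R"
    by (auto simp: adj_rel_def doubleton_eq_iff)
  ultimately have "(w, r) \<in> ?R \<and> (r, w) \<in> ?R" if "w \<in> \<Union>(insert {p, q} S)" for w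
    using that r S(1) unfolding edges_connected_def by auto
  then show "edges_connected (insert {p, q} S)"
    unfolding edges_connected_def by (meson rtrancl_trans)
qed

text \<open>The number of ways to extend a connected set of \<open>k\<close> edges of \<open>K\<^sub>m\<^sub>,\<^sub>n\<close>
  that touches \<open>a\<close> left and \<open>b\<close> right vertices to a shelling.\<close>
definition bipartite_completion_count :: "nat \<Rightarrow> nat \<Rightarrow> nat \<Rightarrow> nat \<Rightarrow> nat \<Rightarrow> real" where
  "bipartite_completion_count m n a b k =
     fact (m * n - k) * fact (m + b - 1) * fact (a + n - 1) / (fact (a + b - 1) * fact (m + n - 1))"

lemma bipartite_completion_count_complete: "bipartite_completion_count m n m n (m * n) = 1"
  by (simp add: bipartite_completion_count_def)

lemma bipartite_completion_count_rec:
  assumes bounds: "1 \<le> a" "a \<le> m" "1 \<le> b" "b \<le> n" "k < m * n" "k \<le> a * b"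
  defines "G \<equiv> bipartite_completion_count m n"
  shows "G a b k = real (a * b - k) * G a b (k + 1) + real ((m - a) * b) * G (a + 1) b (k + 1)
     + real (a * (n - b)) * G a (b + 1) (k + 1)"
proof -
  define X where "X = G a b (k + 1)"
  define D where "D = real a + real b"
  have fact_pred: "fact (j + 1 - 1) = real j * fact (j - 1)" if "1 \<le> j" for j :: nat
    using that by (simp add: fact_reduce)
  have "D \<noteq> 0" using bounds by (simp add: D_def)
  have next_edge: "G a b k = (real m * real n - real k) * X"
    using bounds fact_pred[of "m * n - k"]
    by (simp add: G_def X_def bipartite_completion_count_def diff_diff_add)
  have new_left: "D * G (a + 1) b (k + 1) = (real a + real n) * X"
    using fact_pred[of "a + n"] fact_pred[of "a + b"] bounds \<open>D \<noteq> 0\<close>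
    unfolding G_def X_def D_def bipartite_completion_count_def
    by (simp add: ac_simps)
  have new_right: "D * G a (b + 1) (k + 1) = (real m + real b) * X"
    using fact_pred[of "m + b"] fact_pred[of "a + b"] bounds \<open>D \<noteq> 0\<close>
    unfolding G_def X_def D_def bipartite_completion_count_def
    by (simp add: ac_simps)
  have "D * (real (a * b - k) * X + real ((m - a) * b) * G (a + 1) b (k + 1)
       + real (a * (n - b)) * G a (b + 1) (k + 1))
     = (real a * real b - real k) * D * X + (real m - real a) * real b * (D * G (a + 1) b (k + 1))
       + real a * (real n - real b) * (D * G a (b + 1) (k + 1))"
    using bounds by (simp add: algebra_simps)
  also have "\<dots> = ((real a * real b - real k) * (real a + real b)
       + (real m - real a) * real b * (real a + real n)
       + real a * (real n - real b) * (real m + real b)) * X"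
    unfolding new_left new_right by (simp add: D_def algebra_simps)
  also have "\<dots> = D * G a b k"
    unfolding next_edge D_def by (simp add: algebra_simps)
  finally show ?thesis
    using \<open>D \<noteq> 0\<close> by (simp add: X_def)
qed

definition bipartite_edge :: "nat \<times> nat \<Rightarrow> (nat + nat) set" where
  "bipartite_edge = (\<lambda>(i, j). {Inl i, Inr j})"

lemma bipartite_edge_Pair [simp]: "bipartite_edge (i, j) = {Inl i, Inr j}"
  by (simp add: bipartite_edge_def)

lemma inj_bipartite_edge: "inj bipartite_edge"
  by (auto simp: inj_def bipartite_edge_def doubleton_eq_iff)

lemma complete_bipartite_eq_image: "complete_bipartite m n = bipartite_edge ` ({..<m} \<times> {..<n})"
  unfolding complete_bipartite_def bipartite_edge_def by auto

lemma finite_complete_bipartite: "finite (complete_bipartite m n)"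
  unfolding complete_bipartite_eq_image by simp

lemma Inl_in_Union_bipartite_edges: "Inl i \<in> \<Union>(bipartite_edge ` Q) \<longleftrightarrow> i \<in> fst ` Q"
  by (force simp: bipartite_edge_def)

lemma Inr_in_Union_bipartite_edges: "Inr j \<in> \<Union>(bipartite_edge ` Q) \<longleftrightarrow> j \<in> snd ` Q"
  by (force simp: bipartite_edge_def)

lemma edges_connected_insert_bipartite_edge_iff:
  assumes "edges_connected (bipartite_edge ` Q)" "Q \<noteq> {}"
  shows "edges_connected (bipartite_edge ` insert p Q) \<longleftrightarrow> fst p \<in> fst ` Q \<or> snd p \<in> snd ` Q"
proof (cases p)
  case (Pair i j)
  have "\<Union>(bipartite_edge ` Q) \<noteq> {}"
    using assms(2) by (auto simp: bipartite_edge_def)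
  then have "edges_connected (insert {Inl i, Inr j} (bipartite_edge ` Q)) \<longleftrightarrow>
      Inl i \<in> \<Union>(bipartite_edge ` Q) \<or> Inr j \<in> \<Union>(bipartite_edge ` Q)"
    by (simp add: edges_connected_insert_doubleton_iff[OF assms(1)])
  then show ?thesis
    by (simp only: Pair image_insert bipartite_edge_Pair fst_conv snd_conv
        Inl_in_Union_bipartite_edges Inr_in_Union_bipartite_edges)
qed

definition bipartite_next_pairs :: "nat \<Rightarrow> nat \<Rightarrow> (nat \<times> nat) set \<Rightarrow> (nat \<times> nat) set" where
  "bipartite_next_pairs m n Q = {p \<in> {..<m} \<times> {..<n} - Q. fst p \<in> fst ` Q \<or> snd p \<in> snd ` Q}"

lemma card_bipartite_shelling_completions_step:
  assumes Q: "Q \<subseteq> {..<m} \<times> {..<n}" "Q \<noteq> {..<m} \<times> {..<n}" "Q \<noteq> {}"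
    and connected: "edges_connected (bipartite_edge ` Q)"
  shows "card (shelling_completions (complete_bipartite m n) (bipartite_edge ` Q)) =
    (\<Sum>p\<in>bipartite_next_pairs m n Q.
       card (shelling_completions (complete_bipartite m n) (bipartite_edge ` insert p Q)))"
proof -
  let ?E = "complete_bipartite m n"
  let ?P = "bipartite_next_pairs m n Q"
  have image_diff: "?E - bipartite_edge ` Q = bipartite_edge ` ({..<m} \<times> {..<n} - Q)"
    unfolding complete_bipartite_eq_image by (rule image_set_diff[OF inj_bipartite_edge, symmetric])
  have "\<not> ?E \<subseteq> bipartite_edge ` Q"
    using Q(1,2) image_diff by (metis Diff_eq_empty_iff image_is_empty subset_antisym)
  then have "card (shelling_completions ?E (bipartite_edge ` Q)) =
      (\<Sum>e\<in>{e\<in>?E - bipartite_edge ` Q. edges_connected (insert e (bipartite_edge ` Q))}.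
         card (shelling_completions ?E (insert e (bipartite_edge ` Q))))"
    by (rule card_shelling_completions_step[OF finite_complete_bipartite])
  also have "{e\<in>?E - bipartite_edge ` Q. edges_connected (insert e (bipartite_edge ` Q))} =
      bipartite_edge ` ?P"
    unfolding image_diff bipartite_next_pairs_def
    using edges_connected_insert_bipartite_edge_iff[OF connected Q(3)] by auto
  also have "(\<Sum>e\<in>bipartite_edge ` ?P. card (shelling_completions ?E (insert e (bipartite_edge ` Q)))) =
      (\<Sum>p\<in>?P. card (shelling_completions ?E (bipartite_edge ` insert p Q)))"
    by (simp add: sum.reindex inj_on_subset[OF inj_bipartite_edge])
  finally show ?thesis .
qed

lemma card_fst_snd_image_bounds:
  assumes "Q \<subseteq> {..<m} \<times> {..<n}" "Q \<noteq> {}"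
  shows "1 \<le> card (fst ` Q)" "card (fst ` Q) \<le> m" "1 \<le> card (snd ` Q)" "card (snd ` Q) \<le> n"
    and "card Q \<le> card (fst ` Q) * card (snd ` Q)"
proof -
  have A: "fst ` Q \<subseteq> {..<m}" and B: "snd ` Q \<subseteq> {..<n}"
    using assms(1) by auto
  have fin: "finite (fst ` Q)" "finite (snd ` Q)"
    using finite_subset[OF A finite_lessThan] finite_subset[OF B finite_lessThan] .
  then show "1 \<le> card (fst ` Q)" "1 \<le> card (snd ` Q)"
    using assms(2) by (simp_all add: Suc_le_eq card_gt_0_iff)
  show "card (fst ` Q) \<le> m" "card (snd ` Q) \<le> n"
    using card_mono[OF finite_lessThan A] card_mono[OF finite_lessThan B] by simp_all
  have "Q \<subseteq> fst ` Q \<times> snd ` Q" by force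
  from card_mono[OF finite_cartesian_product[OF fin] this]
  show "card Q \<le> card (fst ` Q) * card (snd ` Q)"
    by (simp add: card_cartesian_product)
qed

text \<open>The next pair either lies in the rectangle already spanned by \<open>Q\<close>, or it adds one new
  left vertex, or one new right vertex.\<close>
lemma sum_bipartite_next_pairs:
  fixes g :: "nat \<Rightarrow> nat \<Rightarrow> real"
  assumes Q: "Q \<subseteq> {..<m} \<times> {..<n}"
    and f: "\<And>p. p \<in> bipartite_next_pairs m n Q \<Longrightarrow>
      f p = g (card (fst ` insert p Q)) (card (snd ` insert p Q))"
  defines "a \<equiv> card (fst ` Q)" and "b \<equiv> card (snd ` Q)"
  shows "(\<Sum>p\<in>bipartite_next_pairs m n Q. f p) =
    real (a * b - card Q) * g a b + real ((m - a) * b) * g (a + 1) b + real (a * (n - b)) * g a (b + 1)"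
proof -
  define A B where "A = fst ` Q" and "B = snd ` Q"
  have "A \<subseteq> {..<m}" "B \<subseteq> {..<n}"
    using Q by (auto simp: A_def B_def)
  then have A: "A \<subseteq> {..<m}" "finite A" and B: "B \<subseteq> {..<n}" "finite B"
    by (auto intro: finite_subset)
  have "Q \<subseteq> A \<times> B" by (force simp: A_def B_def)
  define P_old P_left P_right where
    "P_old = A \<times> B - Q" and "P_left = ({..<m} - A) \<times> B" and "P_right = A \<times> ({..<n} - B)"
  have "bipartite_next_pairs m n Q = P_old \<union> P_left \<union> P_right"
    using A B \<open>Q \<subseteq> A \<times> B\<close>
    by (auto simp: bipartite_next_pairs_def P_old_def P_left_def P_right_def A_def B_def)
  moreover have "finite P_old" "finite P_left" "finite P_right"
    using A B by (simp_all add: P_old_def P_left_def P_right_def)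
  moreover have "P_old \<inter> P_left = {}" "(P_old \<union> P_left) \<inter> P_right = {}"
    by (auto simp: P_old_def P_left_def P_right_def)
  ultimately have split: "(\<Sum>p\<in>bipartite_next_pairs m n Q. f p) =
      sum f P_old + sum f P_left + sum f P_right"
    by (simp add: sum.union_disjoint)
  have f_next: "f p = g (card (insert (fst p) A)) (card (insert (snd p) B))"
    if "p \<in> P_old \<union> P_left \<union> P_right" for p
    using f[of p] that \<open>bipartite_next_pairs m n Q = P_old \<union> P_left \<union> P_right\<close>
    by (simp add: A_def B_def)
  have sum_const: "sum f P = real (card P) * c" if "\<And>p. p \<in> P \<Longrightarrow> f p = c" for P c
    using that by simp
  have ab: "a = card A" "b = card B"
    by (simp_all add: a_def b_def A_def B_def)
  have "sum f P_old = real (card P_old) * g a b"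
  proof (rule sum_const)
    fix p assume p: "p \<in> P_old"
    then have "fst p \<in> A" "snd p \<in> B" by (auto simp: P_old_def)
    then show "f p = g a b" using f_next[of p] p by (simp add: ab insert_absorb)
  qed
  moreover have "sum f P_left = real (card P_left) * g (a + 1) b"
  proof (rule sum_const)
    fix p assume p: "p \<in> P_left"
    then have "fst p \<notin> A" "snd p \<in> B" by (auto simp: P_left_def)
    then show "f p = g (a + 1) b" using f_next[of p] p A(2) by (simp add: ab insert_absorb)
  qed
  moreover have "sum f P_right = real (card P_right) * g a (b + 1)"
  proof (rule sum_const)
    fix p assume p: "p \<in> P_right"
    then have "fst p \<in> A" "snd p \<notin> B" by (auto simp: P_right_def)
    then show "f p = g a (b + 1)" using f_next[of p] p B(2) by (simp add: ab insert_absorb)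
  qed
  moreover have "card P_old = a * b - card Q" "card P_left = (m - a) * b" "card P_right = a * (n - b)"
    using A B \<open>Q \<subseteq> A \<times> B\<close> finite_subset[OF \<open>Q \<subseteq> A \<times> B\<close>]
    by (simp_all add: P_old_def P_left_def P_right_def a_def b_def A_def B_def
        card_Diff_subset card_cartesian_product)
  ultimately show ?thesis
    unfolding split by simp
qed

lemma card_bipartite_shelling_completions:
  assumes "Q \<subseteq> {..<m} \<times> {..<n}" "Q \<noteq> {}" "edges_connected (bipartite_edge ` Q)"
  shows "real (card (shelling_completions (complete_bipartite m n) (bipartite_edge ` Q))) =
    bipartite_completion_count m n (card (fst ` Q)) (card (snd ` Q)) (card Q)"
  using assms
proof (induction "card ({..<m} \<times> {..<n} - Q)" arbitrary: Q rule: less_induct)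
  case less
  let ?C = "\<lambda>Q. real (card (shelling_completions (complete_bipartite m n) (bipartite_edge ` Q)))"
  let ?G = "bipartite_completion_count m n"
  have "finite Q"
    using less.prems(1) by (rule finite_subset) simp
  show ?case
  proof (cases "Q = {..<m} \<times> {..<n}")
    case True
    with less.prems(2) have "fst ` Q = {..<m}" "snd ` Q = {..<n}"
      by auto
    then show ?thesis
      using True by (simp add: shelling_completions_eq_Nil complete_bipartite_eq_image
          card_cartesian_product bipartite_completion_count_complete)
  next
    case False
    have IH: "?C (insert p Q) = ?G (card (fst ` insert p Q)) (card (snd ` insert p Q)) (card Q + 1)"
      if "p \<in> bipartite_next_pairs m n Q" for p
    proof -
      have p: "p \<in> {..<m} \<times> {..<n} - Q" "fst p \<in> fst ` Q \<or> snd p \<in> snd ` Q"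
        using that by (auto simp: bipartite_next_pairs_def)
      then have "card ({..<m} \<times> {..<n} - insert p Q) < card ({..<m} \<times> {..<n} - Q)"
        and "edges_connected (bipartite_edge ` insert p Q)"
        using edges_connected_insert_bipartite_edge_iff[OF less.prems(3,2)]
        by (blast intro: psubset_card_mono)+
      then have "?C (insert p Q) =
          ?G (card (fst ` insert p Q)) (card (snd ` insert p Q)) (card (insert p Q))"
        using less.prems(1) p(1) by (intro less.hyps) auto
      then show ?thesis
        using p(1) \<open>finite Q\<close> by simp
    qed
    have "card Q < m * n"
      using False less.prems(1) psubset_card_mono[of "{..<m} \<times> {..<n}" Q]
      by (auto simp: card_cartesian_product)
    have "?C Q = (\<Sum>p\<in>bipartite_next_pairs m n Q. ?C (insert p Q))"
      using card_bipartite_shelling_completions_step[OF less.prems(1) False less.prems(2,3)] by simp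
    also have "\<dots> = real (card (fst ` Q) * card (snd ` Q) - card Q) *
          ?G (card (fst ` Q)) (card (snd ` Q)) (card Q + 1)
        + real ((m - card (fst ` Q)) * card (snd ` Q)) *
          ?G (card (fst ` Q) + 1) (card (snd ` Q)) (card Q + 1)
        + real (card (fst ` Q) * (n - card (snd ` Q))) *
          ?G (card (fst ` Q)) (card (snd ` Q) + 1) (card Q + 1)"
      using less.prems(1) IH by (rule sum_bipartite_next_pairs)
    also have "\<dots> = ?G (card (fst ` Q)) (card (snd ` Q)) (card Q)"
      using card_fst_snd_image_bounds[OF less.prems(1,2)] \<open>card Q < m * n\<close>
      by (intro bipartite_completion_count_rec[symmetric]) auto
    finally show ?thesis .
  qed
qed

theorem theorem2p1:
  fixes m n :: nat
  assumes "m \<ge> 1" and "n \<ge> 1"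
  shows "real (num_shellings (complete_bipartite m n))
         = fact m * fact n * fact (m * n) / fact (m + n - 1)"
proof -
  let ?E = "complete_bipartite m n"
  have "(0, 0) \<in> {..<m} \<times> {..<n}"
    using assms by auto
  then have "\<not> ?E \<subseteq> {}"
    unfolding complete_bipartite_eq_image by blast
  moreover have "{e \<in> ?E - {}. edges_connected (insert e {})} = bipartite_edge ` ({..<m} \<times> {..<n})"
    by (auto simp: complete_bipartite_eq_image edges_connected_doubleton)
  ultimately have "num_shellings ?E =
      (\<Sum>p\<in>{..<m} \<times> {..<n}. card (shelling_completions ?E (bipartite_edge ` {p})))"
    unfolding num_shellings_def shellings_eq_completions_empty
    by (simp add: card_shelling_completions_step finite_complete_bipartite sum.reindex
        inj_on_subset[OF inj_bipartite_edge])
  moreover have "real (card (shelling_completions ?E (bipartite_edge ` {p}))) =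
      bipartite_completion_count m n 1 1 1" if "p \<in> {..<m} \<times> {..<n}" for p
    using card_bipartite_shelling_completions[of "{p}" m n] that
    by (cases p) (simp add: edges_connected_doubleton)
  ultimately have "real (num_shellings ?E) =
      (\<Sum>p\<in>{..<m} \<times> {..<n}. bipartite_completion_count m n 1 1 1)"
    by simp
  also have "\<dots> = fact m * fact n * fact (m * n) / fact (m + n - 1)"
    using assms fact_reduce[of "m * n", where 'a = real]
    by (simp add: bipartite_completion_count_def card_cartesian_product add.commute)
  finally show ?thesis .
qed

end
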